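(* Let $k\ge1$. For every $1\le j\le k$, the function $D_{k,j}$ is nonincreasing on $[0,1)$.
   Context: For an integer $k\ge1$, $f_k:[0,1]\to[0,1]$ denotes the unique decreasing function satisfying $f_k(x)^k-f_k(x)^{k+1}=x^k-x^{k+1}$ for all $x\in[0,1]$; it is continuous with $f_k(0)=1$, $f_k(1)=0$. For $1\le j\le k$ and $y\in[0,1)$ define $T_{k,j}(y):=\dfrac{(1-y)\,y^{j-1}}{f_k(y)^j}$ and $D_{k,j}(y):=T_{k,1}(y)+T_{k,2}(y)+\dots+T_{k,j}(y)$. *)

theory Defs
  imports "HOL-Analysis.Analysis"
begin

text \<open>f_k: the unique decreasing function [0,1] -> [0,1] with
  f(x)^k - f(x)^(k+1) = x^k - x^(k+1). Values outside [0,1] are fixed to 0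
  so that the function is uniquely determined.\<close>
definition fk :: "nat \<Rightarrow> real \<Rightarrow> real" where
  "fk k = (THE f. antimono_on {0..1} f \<and> (\<forall>x\<in>{0..1}. f x \<in> {0..1}) \<and>
      (\<forall>x\<in>{0..1}. f x ^ k - f x ^ (k+1) = x ^ k - x ^ (k+1)) \<and>
      (\<forall>x. x \<notin> {0..1} \<longrightarrow> f x = 0))"

definition Tkj :: "nat \<Rightarrow> nat \<Rightarrow> real \<Rightarrow> real" where
  "Tkj k j y = (1 - y) * y ^ (j - 1) / fk k y ^ j"

definition Dkj :: "nat \<Rightarrow> nat \<Rightarrow> real \<Rightarrow> real" where
  "Dkj k j y = (\<Sum>i=1..j. Tkj k i y)"

end

theory Submission
  imports Defs
begin

(* With the geometric sums  S n r = 1 + r + ... + r^(n-1)  the curve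
     y(r) = r * S k r / S (k+1) r,     f(r) = S k r / S (k+1) r        (r \<ge> 0)
   is a rational parametrisation of the graph of f_k: f^k (1 - f) = y^k (1 - y),
   y is a strictly increasing bijection [0,\<infinity>) \<rightarrow> [0,1), and f is nonincreasing.
   In these coordinates the terms collapse to  T_{k,i+1}(y(r)) = r^i / S k r,
   hence  D_{k,j}(y(r)) = S j r / S k r,  and the theorem reduces to the
   elementary fact that S j r / S k r is nonincreasing in r for 1 \<le> j \<le> k.
   Structure: (1) geometric sums and that ratio inequality; (2) the unimodal
   function h(t) = t^k - t^(k+1); (3) uniqueness of f_k from its defining
   properties, using only the shape of h; (4) the parametrisation, which gives a
   function with those properties and hence identifies f_k along the curve;
   (5) the formula for D_{k,j} along the curve, and the theorem. *)

section \<open>Geometric sums\<close>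

definition gsum :: "nat \<Rightarrow> real \<Rightarrow> real" where
  "gsum n r = (\<Sum>i<n. r ^ i)"

lemma gsum_Suc: "gsum (Suc n) r = gsum n r + r ^ n"
  unfolding gsum_def by simp

lemma gsum_Suc_shift: "gsum (Suc n) r = 1 + r * gsum n r"
  unfolding gsum_def by (subst sum.lessThan_Suc_shift) (simp add: sum_distrib_left)

lemma gsum_add: "gsum (m + n) r = gsum m r + r ^ m * gsum n r"
  by (induction n) (simp_all add: gsum_Suc gsum_def power_add distrib_left)

lemma gsum_nonneg: "0 \<le> r \<Longrightarrow> 0 \<le> gsum n r"
  unfolding gsum_def by (simp add: sum_nonneg)

lemma gsum_ge_one: "0 \<le> r \<Longrightarrow> 1 \<le> n \<Longrightarrow> 1 \<le> gsum n r"
  using gsum_Suc_shift[of "n - 1" r] gsum_nonneg[of r "n - 1"] by (cases n) auto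

lemma gsum_pos: "0 \<le> r \<Longrightarrow> 1 \<le> n \<Longrightarrow> 0 < gsum n r"
  using gsum_ge_one[of r n] by simp

lemma gsum_mono: "0 \<le> a \<Longrightarrow> a \<le> b \<Longrightarrow> gsum n a \<le> gsum n b"
  unfolding gsum_def by (intro sum_mono power_mono) auto

lemma gsum_strict_mono: "0 \<le> a \<Longrightarrow> a < b \<Longrightarrow> 1 \<le> n \<Longrightarrow> gsum (Suc n) a < gsum (Suc n) b"
  using gsum_mono[of a b n] power_strict_mono[of a b n] by (simp add: gsum_Suc)

text \<open>The ratio of the top term to the whole sum, r^n / S n r, is nondecreasing in r:
  termwise, a^n b^i \<le> b^n a^i for i \<le> n and 0 \<le> a \<le> b.\<close>

lemma power_div_gsum_mono:
  assumes "0 \<le> a" "a \<le> b"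
  shows "a ^ n / gsum n a \<le> b ^ n / gsum n b"
proof (cases "n = 0")
  case False
  have "(\<Sum>i<n. a ^ n * b ^ i) \<le> (\<Sum>i<n. b ^ n * a ^ i)"
  proof (rule sum_mono)
    fix i assume "i \<in> {..<n}"
    then have i: "n = i + (n - i)" by simp
    have "a ^ n * b ^ i = (a ^ i * b ^ i) * a ^ (n - i)"
      by (subst i) (simp add: power_add)
    also have "\<dots> \<le> (a ^ i * b ^ i) * b ^ (n - i)"
      using assms by (intro mult_left_mono power_mono) auto
    also have "\<dots> = b ^ n * a ^ i"
      by (subst (2) i) (simp add: power_add)
    finally show "a ^ n * b ^ i \<le> b ^ n * a ^ i" .
  qed
  then have "a ^ n * gsum n b \<le> b ^ n * gsum n a"
    by (simp only: gsum_def sum_distrib_left)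
  moreover have "0 < gsum n a" "0 < gsum n b"
    using gsum_pos[of a n] gsum_pos[of b n] assms False by auto
  ultimately show ?thesis by (simp add: divide_simps mult.commute)
qed (simp add: gsum_def)

text \<open>The core inequality: S j r / S k r is nonincreasing in r when 1 \<le> j \<le> k,
  because S k r / S j r = 1 + (r^j / S j r) * S (k-j) r is a product of
  nondecreasing nonnegative factors plus one.\<close>

lemma gsum_ratio_antimono:
  assumes "0 \<le> a" "a \<le> b" "1 \<le> j" "j \<le> k"
  shows "gsum j b / gsum k b \<le> gsum j a / gsum k a"
proof -
  have quot: "gsum k r / gsum j r = 1 + r ^ j / gsum j r * gsum (k - j) r" if "0 \<le> r" for r
  proof -
    have "0 < gsum j r" using gsum_pos[of r j] that assms by simp
    then show ?thesis
      using gsum_add[of j "k - j" r] assms by (simp add: field_simps)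
  qed
  have "a ^ j / gsum j a * gsum (k - j) a \<le> b ^ j / gsum j b * gsum (k - j) b"
    using assms by (intro mult_mono power_div_gsum_mono gsum_mono)
      (auto simp: gsum_nonneg)
  then have "gsum k a / gsum j a \<le> gsum k b / gsum j b"
    using quot assms by simp
  moreover have "0 < gsum j a" "0 < gsum k a" "0 < gsum j b" "0 < gsum k b"
    using gsum_pos[of a] gsum_pos[of b] assms by auto
  ultimately show ?thesis by (simp add: divide_simps mult.commute)
qed

section \<open>The unimodal function h(t) = t^k - t^(k+1)\<close>

definition hump :: "nat \<Rightarrow> real \<Rightarrow> real" where
  "hump k t = t ^ k - t ^ (k + 1)"

lemma hump_eq: "hump k t = t ^ k * (1 - t)"
  unfolding hump_def by (simp add: algebra_simps)

text \<open>The maximum point of h on [0,1].\<close>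
definition peak :: "nat \<Rightarrow> real" where
  "peak k = real k / (real k + 1)"

lemma peak_bounds: "0 \<le> peak k" "peak k < 1"
  unfolding peak_def by (auto simp: field_simps)

lemma hump_deriv: "1 \<le> k \<Longrightarrow> DERIV (hump k) t :> t ^ (k - 1) * (real k - (real k + 1) * t)"
proof -
  assume k: "1 \<le> k"
  have "DERIV (hump k) t :> real k * t ^ (k - 1) - real (k + 1) * t ^ k"
    unfolding hump_def by (rule derivative_eq_intros refl)+ simp
  moreover have "t ^ k = t ^ (k - 1) * t"
    using k by (metis Suc_diff_le diff_Suc_1 power_Suc2)
  ultimately show ?thesis by (simp add: algebra_simps)
qed

lemma continuous_on_hump: "continuous_on A (hump k)"
  unfolding hump_def by (intro continuous_intros)

text \<open>h' = t^(k-1) (k - (k+1) t) is positive on (0, peak) and negative on (peak, \<infinity>).\<close>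

lemma hump_strict_mono_below_peak:
  assumes k: "1 \<le> k" and "0 \<le> a" "a < b" "b \<le> peak k"
  shows "hump k a < hump k b"
proof (rule DERIV_pos_imp_increasing_open[OF \<open>a < b\<close> _ continuous_on_hump])
  fix t assume t: "a < t" "t < b"
  have "(real k + 1) * t < (real k + 1) * b" using t by simp
  also have "\<dots> \<le> real k" using assms by (simp add: peak_def field_simps)
  finally have "(real k + 1) * t < real k" .
  moreover have "0 < t" using t assms by simp
  ultimately show "\<exists>y. DERIV (hump k) t :> y \<and> 0 < y"
    using hump_deriv[OF k, of t] by auto
qed

lemma hump_strict_anti_above_peak:
  assumes k: "1 \<le> k" and "peak k \<le> a" "a < b"
  shows "hump k b < hump k a"
proof (rule DERIV_neg_imp_decreasing_open[OF \<open>a < b\<close> _ continuous_on_hump])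
  fix t assume t: "a < t" "t < b"
  have "real k \<le> (real k + 1) * a" using assms by (simp add: peak_def field_simps)
  also have "\<dots> < (real k + 1) * t" using t by simp
  finally have "real k < (real k + 1) * t" .
  moreover have "0 < t" using t assms peak_bounds(1)[of k] by linarith
  ultimately show "\<exists>y. DERIV (hump k) t :> y \<and> y < 0"
    using hump_deriv[OF k, of t]
    by (intro exI[of _ "t ^ (k - 1) * (real k - (real k + 1) * t)"]) (auto intro: mult_pos_neg)
qed

lemma hump_inj_below_peak: "1 \<le> k \<Longrightarrow> inj_on (hump k) {0..peak k}"
  by (rule inj_onI) (metis atLeastAtMost_iff hump_strict_mono_below_peak
      linorder_neqE_linordered_idom order_less_irrefl)

lemma hump_inj_above_peak: "1 \<le> k \<Longrightarrow> inj_on (hump k) {peak k..}"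
  by (rule inj_onI) (metis atLeast_iff hump_strict_anti_above_peak
      linorder_neqE_linordered_idom order_less_irrefl)

section \<open>Uniqueness of f_k\<close>

definition fk_spec :: "nat \<Rightarrow> (real \<Rightarrow> real) \<Rightarrow> bool" where
  "fk_spec k f \<longleftrightarrow> antimono_on {0..1} f \<and> (\<forall>x\<in>{0..1}. f x \<in> {0..1}) \<and>
      (\<forall>x\<in>{0..1}. f x ^ k - f x ^ (k+1) = x ^ k - x ^ (k+1)) \<and>
      (\<forall>x. x \<notin> {0..1} \<longrightarrow> f x = 0)"

lemma fk_def_spec: "fk k = (THE f. fk_spec k f)"
  unfolding fk_def fk_spec_def ..

text \<open>A decreasing solution of h(f(x)) = h(x) must swap the two monotone branches
  of h: if some x < peak had f(x) < peak, injectivity of h on [0, peak] would give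
  f = id on an interval to the right of x, contradicting monotonicity; similarly
  on the other side.\<close>

lemma fk_spec_swaps_branches:
  assumes k: "1 \<le> k" and spec: "fk_spec k f" and x: "0 \<le> x" "x \<le> 1"
  shows "x \<le> peak k \<Longrightarrow> peak k \<le> f x" and "peak k \<le> x \<Longrightarrow> f x \<le> peak k"
proof -
  let ?m = "peak k"
  have anti: "f b \<le> f a" if "0 \<le> a" "a \<le> b" "b \<le> 1" for a b
    using spec that unfolding fk_spec_def monotone_on_def by auto
  have range: "0 \<le> f a" "f a \<le> 1" if "0 \<le> a" "a \<le> 1" for a
    using spec that unfolding fk_spec_def by auto
  have rel: "hump k (f a) = hump k a" if "0 \<le> a" "a \<le> 1" for a
    using spec that unfolding fk_spec_def hump_def by auto
  have fixed_below: "f a = a" if "0 \<le> a" "a \<le> ?m" "f a \<le> ?m" for a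
    using inj_onD[OF hump_inj_below_peak[OF k] rel] that range[of a] peak_bounds[of k] by auto
  have fixed_above: "f a = a" if "?m \<le> a" "a \<le> 1" "?m \<le> f a" for a
    using inj_onD[OF hump_inj_above_peak[OF k] rel] that peak_bounds[of k] by auto
  show "peak k \<le> f x" if "x \<le> peak k"
  proof (rule ccontr)
    assume "\<not> ?m \<le> f x"
    then have "f x = x" "x < ?m" using fixed_below[of x] x that by auto
    define z where "z = (x + ?m) / 2"
    have z: "x < z" "z < ?m" using \<open>x < ?m\<close> unfolding z_def by auto
    then have "f z \<le> x" using anti[of x z] \<open>f x = x\<close> x peak_bounds[of k] by auto
    then have "f z = z" using fixed_below[of z] z x by auto
    with \<open>f z \<le> x\<close> z show False by simp
  qed
  show "f x \<le> peak k" if "peak k \<le> x"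
  proof (rule ccontr)
    assume "\<not> f x \<le> ?m"
    then have "f x = x" "?m < x" using fixed_above[of x] x that by auto
    define z where "z = (x + ?m) / 2"
    have z: "?m < z" "z < x" using \<open>?m < x\<close> unfolding z_def by auto
    then have "x \<le> f z" using anti[of z x] \<open>f x = x\<close> x peak_bounds[of k] by auto
    then have "f z = z" using fixed_above[of z] z x by auto
    with \<open>x \<le> f z\<close> z show False by simp
  qed
qed

text \<open>Hence f(x) is the solution of h(t) = h(x) on the branch opposite to x,
  which is unique by injectivity of h on each branch.\<close>

lemma fk_spec_unique:
  assumes k: "1 \<le> k" and "fk_spec k f" "fk_spec k g"
  shows "f = g"
proof
  fix x :: real
  show "f x = g x"
  proof (cases "x \<in> {0..1}")
    case True
    then have x: "0 \<le> x" "x \<le> 1" by auto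
    have same_hump: "hump k (f x) = hump k (g x)"
      using assms True unfolding fk_spec_def hump_def by auto
    have range: "f x \<in> {0..1}" "g x \<in> {0..1}"
      using assms True unfolding fk_spec_def by auto
    show ?thesis
    proof (cases "x \<le> peak k")
      case True
      then have "peak k \<le> f x" "peak k \<le> g x"
        using fk_spec_swaps_branches(1)[OF k _ x] assms by auto
      then show ?thesis
        using inj_onD[OF hump_inj_above_peak[OF k] same_hump] by auto
    next
      case False
      then have "f x \<le> peak k" "g x \<le> peak k"
        using fk_spec_swaps_branches(2)[OF k _ x] assms by auto
      then show ?thesis
        using inj_onD[OF hump_inj_below_peak[OF k] same_hump] range by auto
    qed
  next
    case False
    then show ?thesis using assms unfolding fk_spec_def by auto
  qed
qed

section \<open>A rational parametrisation of the graph of f_k\<close>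

definition par_f :: "nat \<Rightarrow> real \<Rightarrow> real" where
  "par_f k r = gsum k r / gsum (Suc k) r"

definition par_y :: "nat \<Rightarrow> real \<Rightarrow> real" where
  "par_y k r = r * par_f k r"

lemma one_minus_par_y: "0 \<le> r \<Longrightarrow> 1 - par_y k r = 1 / gsum (Suc k) r"
  using gsum_pos[of r "Suc k"] unfolding par_y_def par_f_def
  by (simp add: field_simps gsum_Suc_shift)

lemma one_minus_par_f: "0 \<le> r \<Longrightarrow> 1 - par_f k r = r ^ k / gsum (Suc k) r"
  using gsum_pos[of r "Suc k"] unfolding par_f_def by (simp add: field_simps gsum_Suc)

lemma par_f_bounds: "0 \<le> r \<Longrightarrow> 0 \<le> par_f k r \<and> par_f k r \<le> 1"
  using gsum_Suc[of k r] gsum_nonneg[of r k] gsum_pos[of r "Suc k"] zero_le_power[of r k]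
  unfolding par_f_def by (simp add: divide_le_eq_1)

lemma par_f_antimono: "1 \<le> k \<Longrightarrow> 0 \<le> a \<Longrightarrow> a \<le> b \<Longrightarrow> par_f k b \<le> par_f k a"
  unfolding par_f_def by (rule gsum_ratio_antimono) auto

text \<open>Both coordinates solve the defining equation:
  f^k (1 - f) = r^k S_k^k / S_{k+1}^(k+1) = y^k (1 - y).\<close>

lemma hump_par: "0 \<le> r \<Longrightarrow> hump k (par_f k r) = hump k (par_y k r)"
proof -
  assume r: "0 \<le> r"
  have "hump k (par_f k r) = par_f k r ^ k * (r ^ k / gsum (Suc k) r)"
    unfolding hump_eq one_minus_par_f[OF r] ..
  also have "\<dots> = (r * par_f k r) ^ k * (1 / gsum (Suc k) r)"
    by (simp add: power_mult_distrib)
  also have "\<dots> = hump k (par_y k r)"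
    unfolding hump_eq by (subst one_minus_par_y[OF r]) (simp add: par_y_def)
  finally show ?thesis .
qed

lemma par_y_strict_mono: "1 \<le> k \<Longrightarrow> strict_mono_on {0..} (par_y k)"
proof (rule strict_mono_onI)
  fix a b :: real assume "1 \<le> k" "a \<in> {0..}" "a < b"
  then have "1 / gsum (Suc k) b < 1 / gsum (Suc k) a"
    using gsum_strict_mono[of a b k] gsum_pos[of a "Suc k"]
    by (intro divide_strict_left_mono) auto
  then show "par_y k a < par_y k b"
    using one_minus_par_y[of a k] one_minus_par_y[of b k] \<open>a \<in> {0..}\<close> \<open>a < b\<close> by simp
qed

lemma continuous_on_par_y: "continuous_on {0..R} (par_y k)"
proof -
  have "\<forall>x\<in>{0..R}. gsum (Suc k) x \<noteq> 0"
    using gsum_pos[of _ "Suc k"] by fastforce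
  then show ?thesis unfolding par_y_def par_f_def gsum_def
    by (intro continuous_intros) auto
qed

text \<open>The curve y(r) sweeps out exactly [0,1): it starts at 0, stays below 1, and
  1 - y(r) = 1/S_{k+1}(r) \<le> 1/(1+r), so the intermediate value theorem reaches
  every x < 1 on the interval [0, 1/(1-x)].\<close>

lemma par_y_image: assumes k: "1 \<le> k" shows "par_y k ` {0..} = {0..<1}"
proof
  show "par_y k ` {0..} \<subseteq> {0..<1}"
  proof
    fix x assume "x \<in> par_y k ` {0..}"
    then obtain r where r: "0 \<le> r" "x = par_y k r" by auto
    then have "0 \<le> x" using par_f_bounds[OF r(1)] by (simp add: par_y_def)
    moreover have "0 < 1 / gsum (Suc k) r" using gsum_pos[OF r(1), of "Suc k"] by simp
    then have "x < 1" using one_minus_par_y[OF r(1), of k] r(2) by linarith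
    ultimately show "x \<in> {0..<1}" by simp
  qed
next
  show "{0..<1} \<subseteq> par_y k ` {0..}"
  proof
    fix x :: real assume "x \<in> {0..<1}"
    then have x: "0 \<le> x" "x < 1" by auto
    define R where "R = 1 / (1 - x)"
    have R: "1 \<le> R" using x unfolding R_def by (simp add: field_simps)
    have "1 + R \<le> gsum (Suc k) R"
      using gsum_Suc_shift[of k R] gsum_ge_one[of R k] R k
      by (simp add: mult_le_cancel_left1)
    then have "1 / gsum (Suc k) R \<le> 1 / R"
      using R by (intro divide_left_mono) auto
    moreover have "1 / R = 1 - x" unfolding R_def by simp
    ultimately have "x \<le> par_y k R"
      using one_minus_par_y[of R k] R by simp
    moreover have "par_y k 0 \<le> x" using x by (simp add: par_y_def)
    ultimately obtain r where "0 \<le> r" "r \<le> R" "par_y k r = x"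
      using IVT'[of "par_y k" 0 x R, OF _ _ _ continuous_on_par_y] R by auto
    then show "x \<in> par_y k ` {0..}" by auto
  qed
qed

lemma antimono_on_via_par_y:
  assumes k: "1 \<le> k"
    and along: "\<And>a b. 0 \<le> a \<Longrightarrow> a \<le> b \<Longrightarrow> g (par_y k b) \<le> g (par_y k a)"
  shows "antimono_on {0..<1} g"
proof (rule monotone_onI)
  fix x y :: real assume xy: "x \<in> {0..<1}" "y \<in> {0..<1}" "x \<le> y"
  then have "x \<in> par_y k ` {0..}" "y \<in> par_y k ` {0..}"
    using par_y_image[OF k] by auto
  then obtain a b where ab: "0 \<le> a" "x = par_y k a" "0 \<le> b" "y = par_y k b"
    by (elim imageE) auto
  then have "a \<le> b"
    using strict_mono_on_less_eq[OF par_y_strict_mono[OF k], of a b] xy by simp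
  then show "g y \<le> g x" using along ab by simp
qed

text \<open>The candidate for f_k: f(r) as a function of y(r), extended by 0 at 1 and
  outside [0,1].\<close>
definition fk_param :: "nat \<Rightarrow> real \<Rightarrow> real" where
  "fk_param k x = (if 0 \<le> x \<and> x < 1 then par_f k (inv_into {0..} (par_y k) x) else 0)"

lemma fk_param_par_y:
  assumes "1 \<le> k" "0 \<le> r"
  shows "fk_param k (par_y k r) = par_f k r"
proof -
  have "par_y k r \<in> {0..<1}" using par_y_image assms by blast
  moreover have "inv_into {0..} (par_y k) (par_y k r) = r"
    using strict_mono_on_imp_inj_on[OF par_y_strict_mono] assms by (simp add: inv_into_f_eq)
  ultimately show ?thesis unfolding fk_param_def by simp
qed

lemma fk_spec_fk_param: assumes k: "1 \<le> k" shows "fk_spec k (fk_param k)"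
proof -
  have on_curve: "\<exists>r\<ge>0. x = par_y k r" if "0 \<le> x" "x < 1" for x
  proof -
    have "x \<in> par_y k ` {0..}" using par_y_image[OF k] that by simp
    then show ?thesis by (elim imageE) auto
  qed
  have bounds: "0 \<le> fk_param k x \<and> fk_param k x \<le> 1" for x
  proof (cases "0 \<le> x \<and> x < 1")
    case True
    then obtain r where "0 \<le> r" "x = par_y k r" using on_curve by blast
    then show ?thesis using fk_param_par_y[OF k] par_f_bounds by simp
  qed (auto simp: fk_param_def)
  have anti_below_1: "antimono_on {0..<1} (fk_param k)"
    using fk_param_par_y[OF k] par_f_antimono[OF k]
    by (intro antimono_on_via_par_y[OF k]) auto
  have anti: "fk_param k y \<le> fk_param k x" if "0 \<le> x" "x \<le> y" "y \<le> 1" for x y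
  proof (cases "y = 1")
    case True
    then show ?thesis using bounds[of x] by (simp add: fk_param_def)
  next
    case False
    then show ?thesis using anti_below_1 that by (auto simp: monotone_on_def)
  qed
  have rel: "hump k (fk_param k x) = hump k x" if "0 \<le> x" "x \<le> 1" for x
  proof (cases "x = 1")
    case True
    then show ?thesis using k by (simp add: fk_param_def hump_def)
  next
    case False
    then have "x < 1" using that by simp
    then obtain r where r: "0 \<le> r" "x = par_y k r" using on_curve[OF \<open>0 \<le> x\<close>] by blast
    show ?thesis using fk_param_par_y[OF k r(1)] hump_par[OF r(1)] r(2) by simp
  qed
  show ?thesis unfolding fk_spec_def
  proof (intro conjI ballI allI impI)
    show "antimono_on {0..1} (fk_param k)"
      using anti by (intro monotone_onI) auto
    show "fk_param k x \<in> {0..1}" for x using bounds[of x] by simp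
    show "fk_param k x ^ k - fk_param k x ^ (k+1) = x ^ k - x ^ (k+1)" if "x \<in> {0..1}" for x
      using rel[of x] that unfolding hump_def by simp
    show "fk_param k x = 0" if "x \<notin> {0..1}" for x
      using that by (auto simp: fk_param_def)
  qed
qed

lemma fk_par_y: assumes "1 \<le> k" "0 \<le> r" shows "fk k (par_y k r) = par_f k r"
proof -
  have "fk k = fk_param k"
    unfolding fk_def_spec
    using fk_spec_fk_param fk_spec_unique assms(1) by (intro the_equality) blast+
  then show ?thesis using fk_param_par_y assms by simp
qed

text \<open>Along the curve the terms become T_{k,i+1}(y) = (1/S_{k+1}) r^i f^i / f^(i+1)
  = r^i / S_k(r), so D_{k,j}(y(r)) = S_j(r) / S_k(r).\<close>

lemma Tkj_par_y:
  assumes k: "1 \<le> k" and r: "0 \<le> r"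
  shows "Tkj k (Suc i) (par_y k r) = r ^ i / gsum k r"
proof -
  have pos: "0 < gsum k r" "0 < gsum (Suc k) r" using gsum_pos r k by auto
  then have "0 < par_f k r" unfolding par_f_def by simp
  then have "Tkj k (Suc i) (par_y k r) = (1 - par_y k r) * r ^ i / par_f k r"
    unfolding Tkj_def fk_par_y[OF k r] by (simp add: par_y_def power_mult_distrib)
  also have "\<dots> = r ^ i / gsum k r"
    using pos unfolding one_minus_par_y[OF r] par_f_def by simp
  finally show ?thesis .
qed

lemma Dkj_par_y:
  assumes "1 \<le> k" "0 \<le> r"
  shows "Dkj k j (par_y k r) = gsum j r / gsum k r"
proof -
  have "Dkj k j (par_y k r) = (\<Sum>i<j. Tkj k (Suc i) (par_y k r))"
    unfolding Dkj_def by (simp add: sum.atLeast1_atMost_eq)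
  also have "\<dots> = (\<Sum>i<j. r ^ i / gsum k r)" using Tkj_par_y assms by simp
  finally show ?thesis unfolding gsum_def by (simp add: sum_divide_distrib)
qed

theorem mainTheorem9:
  fixes k j :: nat
  assumes "1 \<le> k" and "1 \<le> j" and "j \<le> k"
  shows "antimono_on {0..<1} (Dkj k j)"
proof (rule antimono_on_via_par_y[OF assms(1)])
  fix a b :: real assume "0 \<le> a" "a \<le> b"
  then show "Dkj k j (par_y k b) \<le> Dkj k j (par_y k a)"
    using Dkj_par_y[OF assms(1)] gsum_ratio_antimono[OF _ _ assms(2,3)] by simp
qed

end
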